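(* The canonical model $\mathcal{M}^{Can}$ is a Trust model; that is, $R$ is serial and transitive, and for each $\Gamma\in I$ and each propositional formula $\varphi$, $\|\varphi\|_\Gamma\neq\emptyset$ implies $\mathit{most}(\|\varphi\|_\Gamma)\neq\emptyset$.
   Context: $\mathcal{L}_T$: $\alpha::=\varphi\mid\varphi\rightsquigarrow\varphi\mid B(\alpha)\mid\alpha*\alpha\mid\neg\alpha$, with $\varphi$ ranging over classical propositional formulas (set $\mathcal{L}_{CL}$) and $*\in\{\land,\lor,\to,\leftrightarrow\}$. SBTrust is the Hilbert system ($\varphi,\psi,\chi,\varphi_i,\psi_i$ propositional; $\alpha,\beta\in\mathcal{L}_T$; rule outputs in $\mathcal{L}_T$): classical tautologies and Modus Ponens; $\varphi\rightsquigarrow\varphi$; $(\varphi\rightsquigarrow\bot)\to\neg\varphi$; $((\psi\land\chi)\rightsquigarrow\varphi)\to(\psi\rightsquigarrow(\chi\to\varphi))$; $(\neg(\varphi\leftrightarrow\psi)\rightsquigarrow\bot)\to((\varphi\rightsquigarrow\chi)\leftrightarrow(\psi\rightsquigarrow\chi))$; rule RCK: from $(\varphi_1\land\dots\land\varphi_n)\to\varphi_{n+1}$ infer $\bigwedge_{j\le n}(\psi\rightsquigarrow\varphi_j)\to(\psi\rightsquigarrow\varphi_{n+1})$; rule $\mathbf{S5_F}$: from $(\ell_1\land\dots\land\ell_n)\to\chi$ infer $(\ell_1\land\dots\land\ell_n)\to(\neg\chi\rightsquigarrow\bot)$, each $\ell_j$ being $\varphi_j\rightsquigarrow\psi_j$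 or its negation, $\chi$ propositional; $B(\alpha\to\beta)\to(B\alpha\to B\beta)$; $B\alpha\to\neg B\neg\alpha$; $B\alpha\to BB\alpha$; necessitation for $B$. MCS: $\Gamma\subseteq\mathcal{L}_T$ with $\Gamma\nvdash\bot$ and, for each $\alpha$, $\alpha\in\Gamma$ or $\neg\alpha\in\Gamma$. $\Gamma\leftrightsquigarrow\Delta$ iff the MCSs contain the same formulas of the form $\chi\rightsquigarrow\psi$; $[\Gamma]_\leftrightsquigarrow$ its class. $\rightsquigarrow_\varphi(\Gamma)=\{\psi:\varphi\rightsquigarrow\psi\in\Gamma\}$; $\Delta$ is $\varphi$-likely for $\Gamma$ if $\rightsquigarrow_\varphi(\Gamma)\subseteq\Delta$. $S_\Gamma=[\Gamma]_\leftrightsquigarrow\times\mathcal{L}_{CL}\times\{0,1,2\}$; $(\Delta,\varphi,i)\succeq_\Gamma(\Omega,\psi,j)$ iff ($\Delta$ is $\varphi$-likely for $\Gamma$ and $\varphi\in\Omega$) or ($i=1,j=0$) or ($i=2,j=1$) or ($i=0,j=2$). Fix a set $I$ containing exactly one representative of each $\leftrightsquigarrow$-class. The canonical model is $\mathcal{M}^{Can}=\langle S,(S_\Gamma)_{\Gamma\in I},(\succeq_\Gamma)_{\Gamma\in I},R,V\rangle$ with $S=\bigcup_{\Gamma\in I}S_\Gamma$, $V(p)=\{(\Delta,\varphi,i)\in S:p\in\Delta\}$, and $(\Delta,\varphi,i)R(\Omega,\psi,j)$ iff for all $\alpha\in\mathcal{L}_T$, $B(\alpha)\in\Delta\Rightarrow\alpha\in\Omega$.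 Truth: $s\models p$ iff $s\in V(p)$; Boolean clauses as usual; $s\models\varphi\rightsquigarrow\psi$ iff $\mathit{most}(\|\varphi\|_\Gamma)\subseteq\|\psi\|_\Gamma$ where $s\in S_\Gamma$; $s\models B(\alpha)$ iff $v\models\alpha$ for all $v$ with $sRv$; here $\|\varphi\|_\Gamma=\{v\in S_\Gamma:v\models\varphi\}$ and $\mathit{most}(X)=\{x\in X:\forall y\in X\,(y\succeq_\Gamma x\Rightarrow x\succeq_\Gamma y)\}$. A Trust model is a structure $\langle S,(S_i)_{i\in I},(\succeq_i)_{i\in I},R,V\rangle$ where $R\subseteq S\times S$ is serial and transitive, $(S_i)$ is a partition of $S$, each $\succeq_i\subseteq S_i\times S_i$, $V$ maps variables to subsets of $S$, and limitedness holds: for every $i$ and propositional $\varphi$, $\|\varphi\|_i\neq\emptyset\Rightarrow\mathit{most}(\|\varphi\|_i)\neq\emptyset$. *)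

theory Defs
  imports Main
begin

text \<open>One datatype for all formulas; the language L_T and the propositional
fragment L_CL are carved out by the predicates wf and is_prop.\<close>

datatype 'v fm =
    Var 'v
  | Bot
  | Top
  | Neg "'v fm"
  | And "'v fm" "'v fm"
  | Or "'v fm" "'v fm"
  | Imp "'v fm" "'v fm"
  | Iff "'v fm" "'v fm"
  | Cond "'v fm" "'v fm"
  | Bel "'v fm"

fun is_prop :: "'v fm \<Rightarrow> bool" where
  "is_prop (Var p) = True"
| "is_prop Bot = True"
| "is_prop Top = True"
| "is_prop (Neg a) = is_prop a"
| "is_prop (And a b) = (is_prop a \<and> is_prop b)"
| "is_prop (Or a b) = (is_prop a \<and> is_prop b)"
| "is_prop (Imp a b) = (is_prop a \<and> is_prop b)"
| "is_prop (Iff a b) = (is_prop a \<and> is_prop b)"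
| "is_prop (Cond a b) = False"
| "is_prop (Bel a) = False"

fun wf :: "'v fm \<Rightarrow> bool" where
  "wf (Var p) = True"
| "wf Bot = True"
| "wf Top = True"
| "wf (Neg a) = wf a"
| "wf (And a b) = (wf a \<and> wf b)"
| "wf (Or a b) = (wf a \<and> wf b)"
| "wf (Imp a b) = (wf a \<and> wf b)"
| "wf (Iff a b) = (wf a \<and> wf b)"
| "wf (Cond a b) = (is_prop a \<and> is_prop b)"
| "wf (Bel a) = wf a"

definition LCL :: "'v fm set" where "LCL = {\<phi>. is_prop \<phi>}"
definition LT :: "'v fm set" where "LT = {\<alpha>. wf \<alpha>}"

text \<open>Classical tautologies: formulas true under every Boolean valuation that
treats the modal subformulas (Cond, Bel) as atoms, i.e. substitution
instances of propositional tautologies.\<close>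
fun teval :: "('v fm \<Rightarrow> bool) \<Rightarrow> 'v fm \<Rightarrow> bool" where
  "teval f (Var p) = f (Var p)"
| "teval f Bot = False"
| "teval f Top = True"
| "teval f (Neg a) = (\<not> teval f a)"
| "teval f (And a b) = (teval f a \<and> teval f b)"
| "teval f (Or a b) = (teval f a \<or> teval f b)"
| "teval f (Imp a b) = (teval f a \<longrightarrow> teval f b)"
| "teval f (Iff a b) = (teval f a \<longleftrightarrow> teval f b)"
| "teval f (Cond a b) = f (Cond a b)"
| "teval f (Bel a) = f (Bel a)"

definition tautology :: "'v fm \<Rightarrow> bool" where
  "tautology \<alpha> \<longleftrightarrow> (\<forall>f. teval f \<alpha>)"

fun conjs :: "'v fm list \<Rightarrow> 'v fm" where
  "conjs [] = Top"
| "conjs [x] = x"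
| "conjs (x # y # ys) = And x (conjs (y # ys))"

definition is_lit :: "'v fm \<Rightarrow> bool" where
  "is_lit l \<longleftrightarrow> (\<exists>\<phi> \<psi>. is_prop \<phi> \<and> is_prop \<psi> \<and> (l = Cond \<phi> \<psi> \<or> l = Neg (Cond \<phi> \<psi>)))"

inductive derivable :: "'v fm \<Rightarrow> bool" where
  Taut: "wf \<alpha> \<Longrightarrow> tautology \<alpha> \<Longrightarrow> derivable \<alpha>"
| MP: "derivable \<alpha> \<Longrightarrow> derivable (Imp \<alpha> \<beta>) \<Longrightarrow> derivable \<beta>"
| Refl: "is_prop \<phi> \<Longrightarrow> derivable (Cond \<phi> \<phi>)"
| CondBot: "is_prop \<phi> \<Longrightarrow> derivable (Imp (Cond \<phi> Bot) (Neg \<phi>))"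
| CondAnd: "is_prop \<phi> \<Longrightarrow> is_prop \<psi> \<Longrightarrow> is_prop \<chi> \<Longrightarrow>
     derivable (Imp (Cond (And \<psi> \<chi>) \<phi>) (Cond \<psi> (Imp \<chi> \<phi>)))"
| CondEq: "is_prop \<phi> \<Longrightarrow> is_prop \<psi> \<Longrightarrow> is_prop \<chi> \<Longrightarrow>
     derivable (Imp (Cond (Neg (Iff \<phi> \<psi>)) Bot) (Iff (Cond \<phi> \<chi>) (Cond \<psi> \<chi>)))"
| RCK: "phis \<noteq> [] \<Longrightarrow> \<forall>x\<in>set phis. is_prop x \<Longrightarrow> is_prop \<phi> \<Longrightarrow> is_prop \<psi> \<Longrightarrow>
     derivable (Imp (conjs phis) \<phi>) \<Longrightarrow>
     derivable (Imp (conjs (map (Cond \<psi>) phis)) (Cond \<psi> \<phi>))"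
| S5F: "ls \<noteq> [] \<Longrightarrow> \<forall>l\<in>set ls. is_lit l \<Longrightarrow> is_prop \<chi> \<Longrightarrow>
     derivable (Imp (conjs ls) \<chi>) \<Longrightarrow>
     derivable (Imp (conjs ls) (Cond (Neg \<chi>) Bot))"
| K: "wf \<alpha> \<Longrightarrow> wf \<beta> \<Longrightarrow> derivable (Imp (Bel (Imp \<alpha> \<beta>)) (Imp (Bel \<alpha>) (Bel \<beta>)))"
| D: "wf \<alpha> \<Longrightarrow> derivable (Imp (Bel \<alpha>) (Neg (Bel (Neg \<alpha>))))"
| Four: "wf \<alpha> \<Longrightarrow> derivable (Imp (Bel \<alpha>) (Bel (Bel \<alpha>)))"
| Nec: "derivable \<alpha> \<Longrightarrow> derivable (Bel \<alpha>)"

definition derives :: "'v fm set \<Rightarrow> 'v fm \<Rightarrow> bool" where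
  "derives \<Gamma> \<alpha> \<longleftrightarrow> (\<exists>xs. set xs \<subseteq> \<Gamma> \<and> derivable (foldr Imp xs \<alpha>))"

definition MCS :: "'v fm set \<Rightarrow> bool" where
  "MCS \<Gamma> \<longleftrightarrow> \<Gamma> \<subseteq> LT \<and> \<not> derives \<Gamma> Bot \<and> (\<forall>\<alpha>\<in>LT. \<alpha> \<in> \<Gamma> \<or> Neg \<alpha> \<in> \<Gamma>)"

definition cond_equiv :: "'v fm set \<Rightarrow> 'v fm set \<Rightarrow> bool" where
  "cond_equiv \<Gamma> \<Delta> \<longleftrightarrow> (\<forall>\<chi> \<psi>. Cond \<chi> \<psi> \<in> \<Gamma> \<longleftrightarrow> Cond \<chi> \<psi> \<in> \<Delta>)"

definition cond_class :: "'v fm set \<Rightarrow> 'v fm set set" where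
  "cond_class \<Gamma> = {\<Delta>. MCS \<Delta> \<and> cond_equiv \<Gamma> \<Delta>}"

definition cond_cons :: "'v fm set \<Rightarrow> 'v fm \<Rightarrow> 'v fm set" where
  "cond_cons \<Gamma> \<phi> = {\<psi>. Cond \<phi> \<psi> \<in> \<Gamma>}"

definition likely :: "'v fm set \<Rightarrow> 'v fm \<Rightarrow> 'v fm set \<Rightarrow> bool" where
  "likely \<Gamma> \<phi> \<Delta> \<longleftrightarrow> cond_cons \<Gamma> \<phi> \<subseteq> \<Delta>"

type_synonym 'v world = "'v fm set \<times> 'v fm \<times> nat"

definition canS :: "'v fm set \<Rightarrow> 'v world set" where
  "canS \<Gamma> = cond_class \<Gamma> \<times> LCL \<times> {0, 1, 2}"

definition canPref :: "'v fm set \<Rightarrow> ('v world \<times> 'v world) set" where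
  "canPref \<Gamma> = {((\<Delta>, \<phi>, i), (\<Omega>, \<psi>, j)).
      (\<Delta>, \<phi>, i) \<in> canS \<Gamma> \<and> (\<Omega>, \<psi>, j) \<in> canS \<Gamma> \<and>
      ((likely \<Gamma> \<phi> \<Delta> \<and> \<phi> \<in> \<Omega>) \<or> (i = 1 \<and> j = 0) \<or> (i = 2 \<and> j = 1) \<or> (i = 0 \<and> j = 2))}"

definition representatives :: "'v fm set set \<Rightarrow> bool" where
  "representatives I \<longleftrightarrow> (\<forall>\<Gamma>\<in>I. MCS \<Gamma>) \<and>
     (\<forall>\<Delta>. MCS \<Delta> \<longrightarrow> (\<exists>!\<Gamma>. \<Gamma> \<in> I \<and> cond_equiv \<Gamma> \<Delta>))"

definition canWorlds :: "'v fm set set \<Rightarrow> 'v world set" where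
  "canWorlds I = (\<Union>\<Gamma>\<in>I. canS \<Gamma>)"

definition canR :: "'v fm set set \<Rightarrow> ('v world \<times> 'v world) set" where
  "canR I = {((\<Delta>, \<phi>, i), (\<Omega>, \<psi>, j)).
      (\<Delta>, \<phi>, i) \<in> canWorlds I \<and> (\<Omega>, \<psi>, j) \<in> canWorlds I \<and>
      (\<forall>\<alpha>\<in>LT. Bel \<alpha> \<in> \<Delta> \<longrightarrow> \<alpha> \<in> \<Omega>)}"

definition canV :: "'v fm set set \<Rightarrow> 'v \<Rightarrow> 'v world set" where
  "canV I p = {(\<Delta>, \<phi>, i) \<in> canWorlds I. Var p \<in> \<Delta>}"

definition most :: "('w \<times> 'w) set \<Rightarrow> 'w set \<Rightarrow> 'w set" where
  "most r X = {x \<in> X. \<forall>y\<in>X. (y, x) \<in> r \<longrightarrow> (x, y) \<in> r}"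

fun sat :: "'i set \<Rightarrow> ('i \<Rightarrow> 'w set) \<Rightarrow> ('i \<Rightarrow> ('w \<times> 'w) set) \<Rightarrow> ('w \<times> 'w) set
            \<Rightarrow> ('v \<Rightarrow> 'w set) \<Rightarrow> 'w \<Rightarrow> 'v fm \<Rightarrow> bool" where
  "sat I Sf P R V s (Var p) = (s \<in> V p)"
| "sat I Sf P R V s Bot = False"
| "sat I Sf P R V s Top = True"
| "sat I Sf P R V s (Neg a) = (\<not> sat I Sf P R V s a)"
| "sat I Sf P R V s (And a b) = (sat I Sf P R V s a \<and> sat I Sf P R V s b)"
| "sat I Sf P R V s (Or a b) = (sat I Sf P R V s a \<or> sat I Sf P R V s b)"
| "sat I Sf P R V s (Imp a b) = (sat I Sf P R V s a \<longrightarrow> sat I Sf P R V s b)"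
| "sat I Sf P R V s (Iff a b) = (sat I Sf P R V s a \<longleftrightarrow> sat I Sf P R V s b)"
| "sat I Sf P R V s (Cond a b) =
     (\<exists>i\<in>I. s \<in> Sf i \<and>
        most (P i) {v \<in> Sf i. sat I Sf P R V v a} \<subseteq> {v \<in> Sf i. sat I Sf P R V v b})"
| "sat I Sf P R V s (Bel a) = (\<forall>v. (s, v) \<in> R \<longrightarrow> sat I Sf P R V v a)"

definition truth_set :: "'i set \<Rightarrow> ('i \<Rightarrow> 'w set) \<Rightarrow> ('i \<Rightarrow> ('w \<times> 'w) set) \<Rightarrow> ('w \<times> 'w) set
            \<Rightarrow> ('v \<Rightarrow> 'w set) \<Rightarrow> 'i \<Rightarrow> 'v fm \<Rightarrow> 'w set" where
  "truth_set I Sf P R V i \<phi> = {v \<in> Sf i. sat I Sf P R V v \<phi>}"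

definition trust_model :: "'w set \<Rightarrow> 'i set \<Rightarrow> ('i \<Rightarrow> 'w set) \<Rightarrow> ('i \<Rightarrow> ('w \<times> 'w) set)
            \<Rightarrow> ('w \<times> 'w) set \<Rightarrow> ('v \<Rightarrow> 'w set) \<Rightarrow> bool" where
  "trust_model S I Sf P R V \<longleftrightarrow>
     R \<subseteq> S \<times> S \<and>
     (\<forall>s\<in>S. \<exists>t. (s, t) \<in> R) \<and>
     trans R \<and>
     (\<forall>i\<in>I. Sf i \<noteq> {}) \<and>
     (\<forall>i\<in>I. \<forall>j\<in>I. i \<noteq> j \<longrightarrow> Sf i \<inter> Sf j = {}) \<and>
     (\<Union>i\<in>I. Sf i) = S \<and>
     (\<forall>i\<in>I. P i \<subseteq> Sf i \<times> Sf i) \<and>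
     (\<forall>p. V p \<subseteq> S) \<and>
     (\<forall>i\<in>I. \<forall>\<phi>. is_prop \<phi> \<longrightarrow>
        truth_set I Sf P R V i \<phi> \<noteq> {} \<longrightarrow> most (P i) (truth_set I Sf P R V i \<phi>) \<noteq> {})"

end

(* Seriality: by axiom D the set {\<alpha>. B \<alpha> \<in> \<Delta>} is consistent, so a Lindenbaum extension \<Omega>
   of it gives the R-successor (\<Omega>, \<top>, 0). Transitivity is axiom 4.
   Limitedness: if \<phi> holds somewhere in the class of \<Gamma>, then \<phi> \<leadsto> \<bottom> \<notin> \<Gamma>, and
   S5_F, CondEq, CondAnd and RCK show that \<phi>, the \<phi>-consequents of \<Gamma> and the conditional
   literals of \<Gamma> are jointly consistent. A Lindenbaum extension \<Delta> of them lies in the class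
   of \<Gamma> and is \<phi>-likely, so (\<Delta>, \<phi>, 0) is preferred to every \<phi>-world and is most. *)
theory Submission imports Defs begin

lemma teval_foldr_Imp: "teval f (foldr Imp xs c) = ((\<forall>x\<in>set xs. teval f x) \<longrightarrow> teval f c)"
  by (induction xs) auto

lemma wf_foldr_Imp: "wf (foldr Imp xs c) = ((\<forall>x\<in>set xs. wf x) \<and> wf c)"
  by (induction xs) auto

lemma teval_conjs: "teval f (conjs ys) = (\<forall>y\<in>set ys. teval f y)"
  by (induction ys rule: conjs.induct) auto

lemma wf_conjs: "wf (conjs ys) = (\<forall>y\<in>set ys. wf y)"
  by (induction ys rule: conjs.induct) auto

lemma is_prop_conjs: "is_prop (conjs ys) = (\<forall>y\<in>set ys. is_prop y)"
  by (induction ys rule: conjs.induct) auto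

lemma is_prop_imp_wf: "is_prop a \<Longrightarrow> wf a"
  by (induction a) auto

lemma is_lit_imp_wf: "is_lit l \<Longrightarrow> wf l"
  unfolding is_lit_def by auto

lemma derivable_imp_wf: "derivable a \<Longrightarrow> wf a"
proof (induction rule: derivable.induct)
  case (RCK phis \<phi> \<psi>)
  then show ?case by (auto simp: wf_conjs is_prop_conjs is_prop_imp_wf)
next
  case (S5F ls \<chi>)
  then show ?case by (auto simp: wf_conjs is_lit_imp_wf is_prop_imp_wf)
qed (auto simp: is_prop_imp_wf)

lemma derivable_taut_consequence:
  assumes "\<forall>h\<in>set hs. derivable h" "wf c" "\<forall>f. (\<forall>h\<in>set hs. teval f h) \<longrightarrow> teval f c"
  shows "derivable c"
  using assms
proof (induction hs arbitrary: c)
  case Nil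
  then show ?case by (auto intro: Taut simp: tautology_def)
next
  case (Cons h hs)
  have "derivable (Imp h c)"
    using Cons.prems derivable_imp_wf by (intro Cons.IH) auto
  then show ?case using Cons.prems derivable.MP by auto
qed

lemma derivable_refutation_regroup:
  assumes "derivable (foldr Imp xs Bot)" "set xs \<subseteq> set ls \<union> set ps" "\<forall>x\<in>set ls \<union> set ps. wf x"
  shows "derivable (Imp (conjs ls) (Neg (conjs ps)))"
proof (rule derivable_taut_consequence[of "[foldr Imp xs Bot]"])
  show "\<forall>f. (\<forall>h\<in>set [foldr Imp xs Bot]. teval f h) \<longrightarrow> teval f (Imp (conjs ls) (Neg (conjs ps)))"
    using assms(2) by (auto simp: teval_foldr_Imp teval_conjs)
qed (use assms in \<open>auto simp: wf_conjs\<close>)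

lemma mcs_wf: "MCS \<Gamma> \<Longrightarrow> a \<in> \<Gamma> \<Longrightarrow> wf a"
  unfolding MCS_def LT_def by auto

lemma mcs_taut_consequence:
  assumes "MCS \<Gamma>" "set hs \<subseteq> \<Gamma>" "wf c" "\<forall>f. (\<forall>h\<in>set hs. teval f h) \<longrightarrow> teval f c"
  shows "c \<in> \<Gamma>"
proof (rule ccontr)
  assume "c \<notin> \<Gamma>"
  then have neg: "Neg c \<in> \<Gamma>" using assms unfolding MCS_def LT_def by auto
  have "derivable (foldr Imp (Neg c # hs) Bot)"
    using assms neg mcs_wf[OF assms(1)]
    by (intro Taut) (auto simp: tautology_def teval_foldr_Imp wf_foldr_Imp)
  then have "derives \<Gamma> Bot" unfolding derives_def using neg assms(2)
    by (intro exI[of _ "Neg c # hs"]) auto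
  then show False using assms(1) unfolding MCS_def by auto
qed

lemma mcs_Bot: assumes "MCS \<Gamma>" shows "Bot \<notin> \<Gamma>"
proof
  assume "Bot \<in> \<Gamma>"
  moreover have "derivable (foldr Imp [Bot] Bot)" by (auto intro!: Taut simp: tautology_def)
  ultimately have "derives \<Gamma> Bot" unfolding derives_def by (intro exI[of _ "[Bot]"]) auto
  then show False using assms unfolding MCS_def by blast
qed

lemma mcs_Neg_iff: assumes "MCS \<Gamma>" "wf a" shows "Neg a \<in> \<Gamma> \<longleftrightarrow> a \<notin> \<Gamma>"
proof
  assume "Neg a \<in> \<Gamma>"
  then show "a \<notin> \<Gamma>"
    using mcs_taut_consequence[OF assms(1), of "[a, Neg a]" Bot] mcs_Bot[OF assms(1)] by auto
next
  assume "a \<notin> \<Gamma>"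
  then show "Neg a \<in> \<Gamma>" using assms unfolding MCS_def LT_def by auto
qed

lemma mcs_derivable:
  assumes "MCS \<Gamma>" "derivable a"
  shows "a \<in> \<Gamma>"
proof (rule ccontr)
  assume "a \<notin> \<Gamma>"
  then have "Neg a \<in> \<Gamma>" using mcs_Neg_iff assms derivable_imp_wf by blast
  moreover have "derivable (foldr Imp [Neg a] Bot)"
    using assms(2) derivable_imp_wf by (intro derivable_taut_consequence[of "[a]"]) auto
  ultimately have "derives \<Gamma> Bot" unfolding derives_def by (intro exI[of _ "[Neg a]"]) auto
  then show False using assms(1) unfolding MCS_def by blast
qed

lemma mcs_Top: "MCS \<Gamma> \<Longrightarrow> Top \<in> \<Gamma>"
  by (rule mcs_taut_consequence[of \<Gamma> "[]"]) auto

lemma mcs_MP: "MCS \<Gamma> \<Longrightarrow> a \<in> \<Gamma> \<Longrightarrow> Imp a b \<in> \<Gamma> \<Longrightarrow> b \<in> \<Gamma>"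
  using mcs_taut_consequence[of \<Gamma> "[a, Imp a b]" b] mcs_wf[of \<Gamma> "Imp a b"] by auto

lemma mcs_derivable_Imp: "MCS \<Gamma> \<Longrightarrow> derivable (Imp a b) \<Longrightarrow> a \<in> \<Gamma> \<Longrightarrow> b \<in> \<Gamma>"
  using mcs_MP mcs_derivable by blast

lemma mcs_mem_connective:
  assumes "MCS \<Delta>" "wf a" "wf b" "wf c" "\<forall>f. teval f c = g (teval f a) (teval f b)"
  shows "c \<in> \<Delta> \<longleftrightarrow> g (a \<in> \<Delta>) (b \<in> \<Delta>)"
proof -
  define la where "la = (if a \<in> \<Delta> then a else Neg a)"
  define lb where "lb = (if b \<in> \<Delta> then b else Neg b)"
  have la: "la \<in> \<Delta>" "\<And>f. teval f la \<Longrightarrow> teval f a = (a \<in> \<Delta>)"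
    using mcs_Neg_iff[OF assms(1,2)] by (auto simp: la_def)
  have lb: "lb \<in> \<Delta>" "\<And>f. teval f lb \<Longrightarrow> teval f b = (b \<in> \<Delta>)"
    using mcs_Neg_iff[OF assms(1,3)] by (auto simp: lb_def)
  show ?thesis
  proof (cases "g (a \<in> \<Delta>) (b \<in> \<Delta>)")
    case True
    then have "c \<in> \<Delta>" using la lb assms
      by (intro mcs_taut_consequence[OF assms(1), of "[la, lb]"]) auto
    then show ?thesis using True by simp
  next
    case False
    then have "Neg c \<in> \<Delta>" using la lb assms
      by (intro mcs_taut_consequence[OF assms(1), of "[la, lb]"]) auto
    then show ?thesis using False mcs_Neg_iff[OF assms(1,4)] by simp
  qed
qed

lemma derives_Union_chain:
  assumes "derives (\<Union>\<C>) \<alpha>" "\<C> \<noteq> {}" "subset.chain \<A> \<C>"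
  obtains Y where "Y \<in> \<C>" "derives Y \<alpha>"
proof -
  obtain xs where xs: "set xs \<subseteq> \<Union>\<C>" "derivable (foldr Imp xs \<alpha>)"
    using assms(1) unfolding derives_def by blast
  obtain Y where "Y \<in> \<C>" "set xs \<subseteq> Y"
    using finite_subset_Union_chain[OF finite_set xs(1) assms(2,3)] by blast
  then show thesis using that xs(2) unfolding derives_def by blast
qed

lemma derives_Bot_cut_Neg:
  assumes "derives (insert \<alpha> M) Bot" "derives (insert (Neg \<alpha>) M) Bot" "M \<subseteq> LT"
  shows "derives M Bot"
proof -
  obtain xs where xs: "set xs \<subseteq> insert \<alpha> M" "derivable (foldr Imp xs Bot)"
    using assms(1) unfolding derives_def by blast
  obtain ys where ys: "set ys \<subseteq> insert (Neg \<alpha>) M" "derivable (foldr Imp ys Bot)"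
    using assms(2) unfolding derives_def by blast
  define zs where "zs = filter (\<lambda>x. x \<noteq> \<alpha>) xs @ filter (\<lambda>x. x \<noteq> Neg \<alpha>) ys"
  have zs: "set zs \<subseteq> M" using xs(1) ys(1) unfolding zs_def by auto
  have "derivable (foldr Imp zs Bot)"
  proof (rule derivable_taut_consequence[of "[foldr Imp xs Bot, foldr Imp ys Bot]"])
    show "wf (foldr Imp zs Bot)" using zs assms(3) by (auto simp: wf_foldr_Imp LT_def)
    show "\<forall>f. (\<forall>h\<in>set [foldr Imp xs Bot, foldr Imp ys Bot]. teval f h) \<longrightarrow> teval f (foldr Imp zs Bot)"
    proof (intro allI impI)
      fix f assume "\<forall>h\<in>set [foldr Imp xs Bot, foldr Imp ys Bot]. teval f h"
      then show "teval f (foldr Imp zs Bot)"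
        by (cases "teval f \<alpha>") (auto simp: teval_foldr_Imp zs_def)
    qed
  qed (use xs ys in auto)
  then show ?thesis using zs unfolding derives_def by blast
qed

lemma lindenbaum:
  assumes "X \<subseteq> LT" "\<not> derives X Bot"
  obtains M where "MCS M" "X \<subseteq> M"
proof -
  define \<A> where "\<A> = {Y. X \<subseteq> Y \<and> Y \<subseteq> LT \<and> \<not> derives Y Bot}"
  have "\<exists>M\<in>\<A>. \<forall>Z\<in>\<A>. M \<subseteq> Z \<longrightarrow> Z = M"
  proof (rule subset_Zorn_nonempty)
    show "\<A> \<noteq> {}" using assms unfolding \<A>_def by blast
  next
    fix \<C> assume \<C>: "\<C> \<noteq> {}" "subset.chain \<A> \<C>"
    have "\<not> derives (\<Union>\<C>) Bot"
    proof
      assume "derives (\<Union>\<C>) Bot"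
      then obtain Y where "Y \<in> \<C>" "derives Y Bot" using derives_Union_chain[OF _ \<C>] by blast
      then show False using \<C>(2) unfolding \<A>_def subset.chain_def by blast
    qed
    moreover have "X \<subseteq> \<Union>\<C>" "\<Union>\<C> \<subseteq> LT" using \<C> unfolding \<A>_def subset.chain_def by blast+
    ultimately show "\<Union>\<C> \<in> \<A>" unfolding \<A>_def by blast
  qed
  then obtain M where M: "M \<in> \<A>" and max: "\<And>Z. Z \<in> \<A> \<Longrightarrow> M \<subseteq> Z \<Longrightarrow> Z = M" by blast
  have "\<alpha> \<in> M \<or> Neg \<alpha> \<in> M" if "\<alpha> \<in> LT" for \<alpha>
  proof (rule ccontr)
    assume "\<not> (\<alpha> \<in> M \<or> Neg \<alpha> \<in> M)"
    then have "insert \<alpha> M \<notin> \<A>" "insert (Neg \<alpha>) M \<notin> \<A>" using max by blast+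
    then have "derives (insert \<alpha> M) Bot" "derives (insert (Neg \<alpha>) M) Bot"
      using M that unfolding \<A>_def LT_def by auto
    then show False using derives_Bot_cut_Neg M unfolding \<A>_def by blast
  qed
  then have "MCS M" using M unfolding \<A>_def MCS_def by blast
  then show thesis using that M unfolding \<A>_def by blast
qed

lemma mcs_Bel_foldr_Imp:
  assumes "MCS \<Delta>"
  shows "Bel (foldr Imp xs c) \<in> \<Delta> \<Longrightarrow> \<forall>x\<in>set xs. Bel x \<in> \<Delta> \<Longrightarrow> Bel c \<in> \<Delta>"
proof (induction xs)
  case (Cons x xs)
  have "wf x" "wf (foldr Imp xs c)" using mcs_wf[OF assms Cons.prems(1)] by auto
  moreover have "Bel (Imp x (foldr Imp xs c)) \<in> \<Delta>" using Cons.prems(1) by simp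
  ultimately have "Imp (Bel x) (Bel (foldr Imp xs c)) \<in> \<Delta>"
    using mcs_derivable_Imp[OF assms K] by blast
  moreover have "Bel x \<in> \<Delta>" using Cons.prems(2) by simp
  ultimately have "Bel (foldr Imp xs c) \<in> \<Delta>" using mcs_MP[OF assms] by blast
  then show ?case using Cons by simp
qed simp

lemma belief_set_consistent:
  assumes "MCS \<Delta>"
  shows "\<not> derives {\<alpha>\<in>LT. Bel \<alpha> \<in> \<Delta>} Bot"
proof
  assume "derives {\<alpha>\<in>LT. Bel \<alpha> \<in> \<Delta>} Bot"
  then obtain xs where xs: "set xs \<subseteq> {\<alpha>\<in>LT. Bel \<alpha> \<in> \<Delta>}" "derivable (foldr Imp xs Bot)"
    unfolding derives_def by auto
  have "Bel (foldr Imp xs Bot) \<in> \<Delta>" using mcs_derivable[OF assms Nec[OF xs(2)]] .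
  moreover have "\<forall>x\<in>set xs. Bel x \<in> \<Delta>" using xs(1) by blast
  ultimately have "Bel Bot \<in> \<Delta>" by (rule mcs_Bel_foldr_Imp[OF assms])
  then have "Neg (Bel (Neg Bot)) \<in> \<Delta>" using mcs_derivable_Imp[OF assms D] by simp
  moreover have "Bel (Neg Bot) \<in> \<Delta>"
    by (rule mcs_derivable[OF assms], rule Nec, rule Taut) (auto simp: tautology_def)
  ultimately show False using mcs_Neg_iff[OF assms, of "Bel (Neg Bot)"] by simp
qed

lemma mcs_S5F:
  assumes "MCS \<Gamma>" "ls \<noteq> []" "\<forall>l\<in>set ls. is_lit l" "set ls \<subseteq> \<Gamma>" "is_prop \<chi>"
    "derivable (Imp (conjs ls) \<chi>)"
  shows "Cond (Neg \<chi>) Bot \<in> \<Gamma>"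
proof -
  have "conjs ls \<in> \<Gamma>"
    by (rule mcs_taut_consequence[OF assms(1,4)])
      (use assms(3) in \<open>auto simp: teval_conjs wf_conjs is_lit_imp_wf\<close>)
  then show ?thesis using mcs_derivable_Imp[OF assms(1) S5F[OF assms(2,3,5,6)]] by blast
qed

text \<open>Left logical equivalence, derived from CondEq with S5_F supplying its premise.\<close>
lemma mcs_Cond_left_equiv:
  assumes "MCS \<Gamma>" "is_prop \<phi>" "is_prop \<psi>" "is_prop \<chi>" "\<forall>f. teval f \<phi> = teval f \<psi>"
    "Cond \<phi> \<chi> \<in> \<Gamma>"
  shows "Cond \<psi> \<chi> \<in> \<Gamma>"
proof -
  have "Cond \<phi> \<phi> \<in> \<Gamma>" using mcs_derivable[OF assms(1) Refl[OF assms(2)]] .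
  moreover have "derivable (Imp (conjs [Cond \<phi> \<phi>]) (Iff \<phi> \<psi>))"
    using assms(2,3,5) by (intro derivable_taut_consequence[of "[]"]) (auto simp: is_prop_imp_wf)
  ultimately have "Cond (Neg (Iff \<phi> \<psi>)) Bot \<in> \<Gamma>"
    using mcs_S5F[OF assms(1), of "[Cond \<phi> \<phi>]"] assms(2,3) by (auto simp: is_lit_def)
  then have "Iff (Cond \<phi> \<chi>) (Cond \<psi> \<chi>) \<in> \<Gamma>"
    using mcs_derivable_Imp[OF assms(1) CondEq[OF assms(2-4)]] by blast
  then show ?thesis
    by (intro mcs_taut_consequence[OF assms(1), of "[Iff (Cond \<phi> \<chi>) (Cond \<psi> \<chi>), Cond \<phi> \<chi>]"])
      (use assms(3,4,6) in auto)
qed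

lemma mcs_RCK:
  assumes "MCS \<Gamma>" "phis \<noteq> []" "\<forall>x\<in>set phis. is_prop x" "is_prop \<phi>" "is_prop \<psi>"
    "\<forall>x\<in>set phis. Cond \<psi> x \<in> \<Gamma>" "derivable (Imp (conjs phis) \<phi>)"
  shows "Cond \<psi> \<phi> \<in> \<Gamma>"
proof -
  have "conjs (map (Cond \<psi>) phis) \<in> \<Gamma>"
    by (intro mcs_taut_consequence[OF assms(1), of "map (Cond \<psi>) phis"])
      (use assms(3,5,6) in \<open>auto simp: teval_conjs wf_conjs is_prop_imp_wf\<close>)
  then show ?thesis using mcs_derivable_Imp[OF assms(1) RCK[OF assms(2-5,7)]] by blast
qed

lemma cond_equiv_if_lits_subset:
  assumes "MCS \<Gamma>" "MCS \<Delta>" "{l \<in> \<Gamma>. is_lit l} \<subseteq> \<Delta>"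
  shows "cond_equiv \<Gamma> \<Delta>"
  unfolding cond_equiv_def
proof (intro allI iffI)
  fix a b assume ab: "Cond a b \<in> \<Gamma>"
  then have "is_lit (Cond a b)" using mcs_wf[OF assms(1) ab] unfolding is_lit_def by auto
  then show "Cond a b \<in> \<Delta>" using ab assms(3) by blast
next
  fix a b assume ab: "Cond a b \<in> \<Delta>"
  then have wf: "wf (Cond a b)" using mcs_wf[OF assms(2)] by blast
  then have lit: "is_lit (Neg (Cond a b))" unfolding is_lit_def by auto
  show "Cond a b \<in> \<Gamma>"
  proof (rule ccontr)
    assume "Cond a b \<notin> \<Gamma>"
    then have "Neg (Cond a b) \<in> \<Delta>" using mcs_Neg_iff[OF assms(1) wf] lit assms(3) by blast
    then show False using mcs_Neg_iff[OF assms(2) wf] ab by blast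
  qed
qed

text \<open>If the set were inconsistent, the finitely many premises used would be split into
  conditional literals of \<Gamma> and consequents \<psi> with \<phi> \<leadsto> \<psi> in \<Gamma>; S5_F then refutes
  \<phi> together with those consequents, and CondAnd and RCK turn this into \<phi> \<leadsto> \<bottom>.\<close>
lemma likely_extension_consistent:
  assumes G: "MCS \<Gamma>" and p: "is_prop \<phi>" and not_bot: "Cond \<phi> Bot \<notin> \<Gamma>"
  shows "\<not> derives ({\<phi>} \<union> cond_cons \<Gamma> \<phi> \<union> {l \<in> \<Gamma>. is_lit l}) Bot"
proof
  assume "derives ({\<phi>} \<union> cond_cons \<Gamma> \<phi> \<union> {l \<in> \<Gamma>. is_lit l}) Bot"
  then obtain xs where xs: "set xs \<subseteq> {\<phi>} \<union> cond_cons \<Gamma> \<phi> \<union> {l \<in> \<Gamma>. is_lit l}"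
    "derivable (foldr Imp xs Bot)"
    unfolding derives_def by blast
  define \<psi>s where "\<psi>s = filter (\<lambda>x. Cond \<phi> x \<in> \<Gamma>) xs"
  define ls where "ls = Cond \<phi> \<phi> # filter (\<lambda>x. is_lit x \<and> x \<in> \<Gamma>) xs"
  define Q where "Q = conjs \<psi>s"
  have \<psi>s_cond: "\<forall>x\<in>set \<psi>s. Cond \<phi> x \<in> \<Gamma>" unfolding \<psi>s_def by simp
  have \<psi>s_prop: "\<forall>x\<in>set \<psi>s. is_prop x"
  proof
    fix x assume "x \<in> set \<psi>s"
    then have "wf (Cond \<phi> x)" using \<psi>s_cond mcs_wf[OF G] by blast
    then show "is_prop x" by simp
  qed
  then have Q_prop: "is_prop Q" unfolding Q_def by (simp add: is_prop_conjs)
  have ls_lit: "\<forall>l\<in>set ls. is_lit l" unfolding ls_def is_lit_def using p by auto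
  have ls_sub: "set ls \<subseteq> \<Gamma>" unfolding ls_def using mcs_derivable[OF G Refl[OF p]] by auto
  have "set xs \<subseteq> set ls \<union> set (\<phi> # \<psi>s)"
    using xs(1) unfolding ls_def \<psi>s_def cond_cons_def by auto
  moreover have "\<forall>x\<in>set ls \<union> set (\<phi> # \<psi>s). wf x"
    using ls_lit p \<psi>s_prop by (auto intro: is_lit_imp_wf is_prop_imp_wf)
  ultimately have "derivable (Imp (conjs ls) (Neg (conjs (\<phi> # \<psi>s))))"
    by (rule derivable_refutation_regroup[OF xs(2)])
  then have "Cond (Neg (Neg (conjs (\<phi> # \<psi>s)))) Bot \<in> \<Gamma>"
    using mcs_S5F[OF G _ ls_lit ls_sub] p \<psi>s_prop unfolding ls_def by (simp add: is_prop_conjs)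
  then have "Cond (And \<phi> Q) Bot \<in> \<Gamma>"
    by (rule mcs_Cond_left_equiv[OF G, rotated -1])
      (use p Q_prop \<psi>s_prop in \<open>auto simp: is_prop_conjs teval_conjs Q_def\<close>)
  then have "Cond \<phi> (Imp Q Bot) \<in> \<Gamma>"
    using mcs_derivable_Imp[OF G CondAnd] p Q_prop by simp
  moreover have refutation: "derivable (Imp (conjs (Imp Q Bot # \<psi>s)) Bot)"
    by (rule derivable_taut_consequence[of "[]"])
      (use \<psi>s_prop in \<open>auto simp: wf_conjs teval_conjs is_prop_imp_wf Q_def\<close>)
  ultimately have "Cond \<phi> Bot \<in> \<Gamma>"
    by (intro mcs_RCK[OF G _ _ _ _ _ refutation]) (use \<psi>s_prop \<psi>s_cond p Q_prop in auto)
  then show False using not_bot by blast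
qed

lemma exists_likely_mcs:
  assumes G: "MCS \<Gamma>" and p: "is_prop \<phi>" and "\<Delta>0 \<in> cond_class \<Gamma>" "\<phi> \<in> \<Delta>0"
  obtains \<Delta> where "\<Delta> \<in> cond_class \<Gamma>" "likely \<Gamma> \<phi> \<Delta>" "\<phi> \<in> \<Delta>"
proof -
  define X where "X = {\<phi>} \<union> cond_cons \<Gamma> \<phi> \<union> {l \<in> \<Gamma>. is_lit l}"
  have D0: "MCS \<Delta>0" "cond_equiv \<Gamma> \<Delta>0" using assms(3) unfolding cond_class_def by auto
  have "Cond \<phi> Bot \<notin> \<Gamma>"
  proof
    assume "Cond \<phi> Bot \<in> \<Gamma>"
    then have "Neg \<phi> \<in> \<Delta>0"
      using D0 mcs_derivable_Imp[OF D0(1) CondBot[OF p]] unfolding cond_equiv_def by blast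
    then show False using mcs_Neg_iff[OF D0(1) is_prop_imp_wf[OF p]] assms(4) by blast
  qed
  then have "\<not> derives X Bot" unfolding X_def using likely_extension_consistent[OF G p] by blast
  moreover have "X \<subseteq> LT"
    using mcs_wf[OF G] p unfolding X_def LT_def cond_cons_def
    by (fastforce intro: is_prop_imp_wf)
  ultimately obtain \<Delta> where "MCS \<Delta>" "X \<subseteq> \<Delta>" using lindenbaum by blast
  moreover then have "cond_equiv \<Gamma> \<Delta>"
    using cond_equiv_if_lits_subset[OF G] unfolding X_def by blast
  ultimately show thesis using that unfolding X_def cond_class_def likely_def by blast
qed

lemma canWorlds_mcs: "(\<Delta>, \<psi>, i) \<in> canWorlds I \<Longrightarrow> MCS \<Delta>"
  unfolding canWorlds_def canS_def cond_class_def by auto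

lemma canS_subset_canWorlds: "\<Gamma> \<in> I \<Longrightarrow> canS \<Gamma> \<subseteq> canWorlds I"
  unfolding canWorlds_def by blast

lemma sat_canonical_prop:
  assumes "(\<Delta>, \<psi>, i) \<in> canWorlds I" "is_prop \<phi>"
  shows "sat I canS canPref (canR I) (canV I) (\<Delta>, \<psi>, i) \<phi> \<longleftrightarrow> \<phi> \<in> \<Delta>"
proof -
  have \<Delta>: "MCS \<Delta>" using canWorlds_mcs[OF assms(1)] .
  show ?thesis
    using assms(2)
  proof (induction \<phi>)
    case (Var x)
    then show ?case using assms(1) by (simp add: canV_def)
  next
    case (Neg \<phi>)
    then show ?case using mcs_Neg_iff[OF \<Delta> is_prop_imp_wf] by simp
  next
    case (And a b)
    then show ?case using mcs_mem_connective[OF \<Delta>, of a b "And a b" "(\<and>)"] by (simp add: is_prop_imp_wf)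
  next
    case (Or a b)
    then show ?case using mcs_mem_connective[OF \<Delta>, of a b "Or a b" "(\<or>)"] by (simp add: is_prop_imp_wf)
  next
    case (Imp a b)
    then show ?case using mcs_mem_connective[OF \<Delta>, of a b "Imp a b" "(\<longrightarrow>)"] by (simp add: is_prop_imp_wf)
  next
    case (Iff a b)
    then show ?case using mcs_mem_connective[OF \<Delta>, of a b "Iff a b" "(=)"] by (simp add: is_prop_imp_wf)
  qed (use mcs_Bot[OF \<Delta>] mcs_Top[OF \<Delta>] in auto)
qed

lemma truth_set_canonical_prop:
  assumes "\<Gamma> \<in> I" "is_prop \<phi>"
  shows "truth_set I canS canPref (canR I) (canV I) \<Gamma> \<phi> = {(\<Delta>, \<psi>, i) \<in> canS \<Gamma>. \<phi> \<in> \<Delta>}"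
  using sat_canonical_prop[OF subsetD[OF canS_subset_canWorlds[OF assms(1)]] assms(2)]
  unfolding truth_set_def by auto

lemma most_if_dominates: "x \<in> X \<Longrightarrow> \<forall>y\<in>X. (x, y) \<in> r \<Longrightarrow> x \<in> most r X"
  unfolding most_def by blast

lemma canR_serial:
  assumes "representatives I" "s \<in> canWorlds I"
  shows "\<exists>t. (s, t) \<in> canR I"
proof -
  obtain \<Delta> \<phi> i where s: "s = (\<Delta>, \<phi>, i)" by (cases s) auto
  then have "MCS \<Delta>" using canWorlds_mcs assms(2) by blast
  then obtain \<Omega> where \<Omega>: "MCS \<Omega>" "{\<alpha>\<in>LT. Bel \<alpha> \<in> \<Delta>} \<subseteq> \<Omega>"
    using lindenbaum[OF _ belief_set_consistent] by blast
  then obtain \<Gamma> where "\<Gamma> \<in> I" "\<Omega> \<in> cond_class \<Gamma>"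
    using assms(1) unfolding representatives_def cond_class_def by blast
  then have "(\<Omega>, Top, 0) \<in> canWorlds I"
    using canS_subset_canWorlds unfolding canS_def LCL_def by fastforce
  then have "(s, (\<Omega>, Top, 0)) \<in> canR I" using assms(2) s \<Omega>(2) unfolding canR_def by auto
  then show ?thesis by blast
qed

lemma trans_canR: "trans (canR I)"
proof (rule transI)
  fix x y z assume xy: "(x, y) \<in> canR I" and yz: "(y, z) \<in> canR I"
  obtain \<Delta> a i \<Omega> b j \<Theta> c k where xyz: "x = (\<Delta>, a, i)" "y = (\<Omega>, b, j)" "z = (\<Theta>, c, k)"
    by (metis prod.exhaust)
  have x: "x \<in> canWorlds I" and z: "z \<in> canWorlds I"
    and \<Delta>\<Omega>: "\<forall>\<alpha>\<in>LT. Bel \<alpha> \<in> \<Delta> \<longrightarrow> \<alpha> \<in> \<Omega>" and \<Omega>\<Theta>: "\<forall>\<alpha>\<in>LT. Bel \<alpha> \<in> \<Omega> \<longrightarrow> \<alpha> \<in> \<Theta>"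
    using xy yz unfolding xyz canR_def by auto
  have \<Delta>: "MCS \<Delta>" using canWorlds_mcs x unfolding xyz by blast
  have "\<alpha> \<in> \<Theta>" if "\<alpha> \<in> LT" "Bel \<alpha> \<in> \<Delta>" for \<alpha>
  proof -
    have "wf \<alpha>" using that(1) unfolding LT_def by simp
    then have "Bel (Bel \<alpha>) \<in> \<Delta>" "Bel \<alpha> \<in> LT"
      using mcs_derivable_Imp[OF \<Delta> Four that(2)] unfolding LT_def by auto
    then show ?thesis using \<Delta>\<Omega> \<Omega>\<Theta> that(1) by blast
  qed
  then show "(x, z) \<in> canR I" using x z unfolding xyz canR_def by blast
qed

lemma canS_nonempty:
  assumes "MCS \<Gamma>"
  shows "canS \<Gamma> \<noteq> {}"
proof -
  have "(\<Gamma>, Top, 0) \<in> canS \<Gamma>"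
    using assms unfolding canS_def cond_class_def cond_equiv_def LCL_def by simp
  then show ?thesis by blast
qed

lemma canS_disjoint:
  assumes "representatives I" "\<Gamma> \<in> I" "\<Gamma>' \<in> I" "\<Gamma> \<noteq> \<Gamma>'"
  shows "canS \<Gamma> \<inter> canS \<Gamma>' = {}"
  using assms unfolding representatives_def canS_def cond_class_def by blast

lemma canPref_limited:
  assumes "\<Gamma> \<in> I" "MCS \<Gamma>" "is_prop \<phi>"
    and "truth_set I canS canPref (canR I) (canV I) \<Gamma> \<phi> \<noteq> {}"
  shows "most (canPref \<Gamma>) (truth_set I canS canPref (canR I) (canV I) \<Gamma> \<phi>) \<noteq> {}"
proof -
  let ?T = "{(\<Delta>, \<psi>, i) \<in> canS \<Gamma>. \<phi> \<in> \<Delta>}"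
  obtain \<Delta>0 \<psi>0 i0 where "(\<Delta>0, \<psi>0, i0) \<in> ?T"
    using assms(4) truth_set_canonical_prop[OF assms(1,3)] by auto
  then obtain \<Delta> where \<Delta>: "\<Delta> \<in> cond_class \<Gamma>" "likely \<Gamma> \<phi> \<Delta>" "\<phi> \<in> \<Delta>"
    using exists_likely_mcs[OF assms(2,3)] unfolding canS_def by blast
  then have "(\<Delta>, \<phi>, 0) \<in> ?T" using assms(3) unfolding canS_def LCL_def by simp
  then have "(\<Delta>, \<phi>, 0) \<in> most (canPref \<Gamma>) ?T"
    using \<Delta>(2) by (intro most_if_dominates) (auto simp: canPref_def)
  then show ?thesis using truth_set_canonical_prop[OF assms(1,3)] by auto
qed

theorem lemma4:
  fixes I :: "'v fm set set"
  assumes "representatives I"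
  shows "trust_model (canWorlds I) I canS canPref (canR I) (canV I)"
proof -
  have mcs: "\<And>\<Gamma>. \<Gamma> \<in> I \<Longrightarrow> MCS \<Gamma>" using assms unfolding representatives_def by blast
  show ?thesis
    unfolding trust_model_def
  proof (intro conjI)
    show "canR I \<subseteq> canWorlds I \<times> canWorlds I" unfolding canR_def by auto
    show "\<forall>s\<in>canWorlds I. \<exists>t. (s, t) \<in> canR I" using canR_serial[OF assms] by blast
    show "trans (canR I)" by (rule trans_canR)
    show "\<forall>\<Gamma>\<in>I. canS \<Gamma> \<noteq> {}" using canS_nonempty mcs by blast
    show "\<forall>\<Gamma>\<in>I. \<forall>\<Gamma>'\<in>I. \<Gamma> \<noteq> \<Gamma>' \<longrightarrow> canS \<Gamma> \<inter> canS \<Gamma>' = {}"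
      using canS_disjoint[OF assms] by blast
    show "(\<Union>\<Gamma>\<in>I. canS \<Gamma>) = canWorlds I" unfolding canWorlds_def ..
    show "\<forall>\<Gamma>\<in>I. canPref \<Gamma> \<subseteq> canS \<Gamma> \<times> canS \<Gamma>" unfolding canPref_def by auto
    show "\<forall>p. canV I p \<subseteq> canWorlds I" unfolding canV_def by auto
    show "\<forall>\<Gamma>\<in>I. \<forall>\<phi>. is_prop \<phi> \<longrightarrow>
        truth_set I canS canPref (canR I) (canV I) \<Gamma> \<phi> \<noteq> {} \<longrightarrow>
        most (canPref \<Gamma>) (truth_set I canS canPref (canR I) (canV I) \<Gamma> \<phi>) \<noteq> {}"
      using canPref_limited mcs by blast
  qed
qed

end
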